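(* Let $d\ge1$, $\sigma>0$, $\eta>0$, and for $\nu>1$ set $\tilde\gamma=\frac{\eta\sqrt{\nu-1}}{\sigma}$. Then for every fixed integer $k\ge0$, as $\nu\to+\infty$, \[ \alpha_k^{(\nu,\tilde\gamma)}\sim\frac{\Gamma(k+\frac d2)}{k!\,\Gamma(\frac d2)}\left(\frac{\eta^2}{\sigma^2}\right)^k\left(1+\frac{\eta^2}{\sigma^2}\right)^{-k-\frac d2} \] (the ratio of the two sides tends to $1$). As a consequence, if $\mathbf{X}$ is centered Gaussian in $\mathbb{R}^d$ with covariance $\sigma^2I_d$ and $\mathbf{T}$ is independent with Student density $f_\nu(\mathbf{t})=\frac{\Gamma(\nu+\frac d2)}{\Gamma(\nu)\pi^{d/2}}(1+\Vert\mathbf{t}\Vert^2)^{-\nu-\frac d2}$, then the density $f_{\mathbf{Z}}=\sum_{k\ge0}\alpha_k^{(\nu,\tilde\gamma)}g_{k,\sigma}$ of $\mathbf{Z}=\mathbf{X}+\eta\sqrt{2(\nu-1)}\,\mathbf{T}$ converges, as $\nu\to+\infty$, to the Gaussian density with covariance $(\sigma^2+\eta^2)I_d$, namely $(2\pi(\sigma^2+\eta^2))^{-d/2}\exp\left(-\frac{\Vert\mathbf{z}\Vert^2}{2(\sigma^2+\eta^2)}\right)$.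
   Context: $\alpha_k^{(\nu,\gamma)}=\frac{\Gamma(k+\frac d2)}{k!\,\Gamma(\frac d2)\Gamma(\nu)}\gamma^{2k}\int_0^{\infty}e^{-a}a^{\nu+\frac d2-1}(a+\gamma^2)^{-k-\frac d2}\,da$ for $\gamma>0$, $\nu>0$. For $k\in\mathbb{N}$, $g_{k,\sigma}(\mathbf{z})=\frac{\Gamma(\frac d2)}{\Gamma(k+\frac d2)(\sigma\sqrt{2\pi})^d}\left(\frac{\Vert\mathbf{z}\Vert^2}{2\sigma^2}\right)^k\exp\left(-\frac{\Vert\mathbf{z}\Vert^2}{2\sigma^2}\right)$, $\mathbf{z}\in\mathbb{R}^d$. The random vector $\eta\sqrt{2(\nu-1)}\mathbf{T}$ has covariance $\eta^2 I_d$. *)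

theory Defs
  imports "HOL-Analysis.Analysis"
begin

definition alpha_coef :: "real \<Rightarrow> real \<Rightarrow> real \<Rightarrow> nat \<Rightarrow> real" where
  "alpha_coef d \<nu> \<gamma> k =
     Gamma (real k + d / 2) / (fact k * Gamma (d / 2) * Gamma \<nu>) * \<gamma> ^ (2 * k) *
     (LBINT a:{0<..}. exp (- a) * a powr (\<nu> + d / 2 - 1) * (a + \<gamma>\<^sup>2) powr (- real k - d / 2))"

definition g_fun :: "nat \<Rightarrow> real \<Rightarrow> 'a::euclidean_space \<Rightarrow> real" where
  "g_fun k \<sigma> z =
     Gamma (real DIM('a) / 2) / (Gamma (real k + real DIM('a) / 2) * (\<sigma> * sqrt (2 * pi)) ^ DIM('a)) *
     ((norm z)\<^sup>2 / (2 * \<sigma>\<^sup>2)) ^ k * exp (- (norm z)\<^sup>2 / (2 * \<sigma>\<^sup>2))"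

end

theory Submission
  imports Defs
begin

text \<open>Substituting \<open>t = a / (a + \<gamma>\<^sup>2)\<close> writes \<open>\<alpha>\<^sub>k\<close> as \<open>\<Gamma>(k + d/2) / (k! \<Gamma>(d/2))\<close> times the
  expectation of \<open>t\<^bsup>d/2\<^esub> (1 - t)\<^sup>k\<close> under the Gamma law of shape \<open>\<nu>\<close>. For \<open>\<gamma>\<^sup>2 = (\<eta>\<^sup>2/\<sigma>\<^sup>2)(\<nu> - 1)\<close>
  a Gamma variable \<open>a\<close> of mean and variance \<open>\<nu>\<close> makes \<open>t\<close> concentrate at \<open>\<sigma>\<^sup>2 / (\<sigma>\<^sup>2 + \<eta>\<^sup>2)\<close>; as the
  profile is Lipschitz there, the expectation converges at rate \<open>O(\<nu>\<^bsup>-1/2\<^esub>)\<close>. The expectations lie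
  in \<open>[0, 1]\<close>, so Tannery's theorem passes the limit through \<open>\<Sum>\<^sub>k \<alpha>\<^sub>k g\<^sub>k\<close>, and by the exponential
  series the limiting mixture is the Gaussian density of variance \<open>\<sigma>\<^sup>2 + \<eta>\<^sup>2\<close>.\<close>

lemma power_diff_abs_le:
  fixes x y :: real
  assumes "0 \<le> x" "x \<le> 1" "0 \<le> y" "y \<le> 1"
  shows "\<bar>x ^ m - y ^ m\<bar> \<le> real m * \<bar>x - y\<bar>"
proof (induction m)
  case 0
  then show ?case by simp
next
  case (Suc m)
  have "x ^ Suc m - y ^ Suc m = x * (x ^ m - y ^ m) + y ^ m * (x - y)"
    by (simp add: algebra_simps)
  then have "\<bar>x ^ Suc m - y ^ Suc m\<bar> \<le> \<bar>x\<bar> * \<bar>x ^ m - y ^ m\<bar> + \<bar>y ^ m\<bar> * \<bar>x - y\<bar>"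
    by (metis abs_mult abs_triangle_ineq)
  also have "\<dots> \<le> 1 * \<bar>x ^ m - y ^ m\<bar> + 1 * \<bar>x - y\<bar>"
    using assms by (intro add_mono mult_right_mono) (auto simp: power_le_one)
  also have "\<dots> \<le> real (Suc m) * \<bar>x - y\<bar>"
    using Suc by (simp add: algebra_simps)
  finally show ?case .
qed

lemma powr_half_nat_eq_sqrt_power:
  fixes t :: real
  assumes "t > 0"
  shows "t powr (real n / 2) = sqrt t ^ n"
  using assms by (simp add: powr_half_sqrt[symmetric] powr_realpow[symmetric] powr_powr)

lemma sqrt_diff_abs_le:
  fixes t L :: real
  assumes "t \<ge> 0" "L > 0"
  shows "\<bar>sqrt t - sqrt L\<bar> \<le> \<bar>t - L\<bar> / sqrt L"
proof -
  have "t - L = (sqrt t - sqrt L) * (sqrt t + sqrt L)"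
    using assms by (simp add: algebra_simps)
  then have "\<bar>t - L\<bar> = \<bar>sqrt t - sqrt L\<bar> * (sqrt t + sqrt L)"
    using assms by (simp add: abs_mult add_nonneg_pos)
  moreover have "\<bar>sqrt t - sqrt L\<bar> * sqrt L \<le> \<bar>sqrt t - sqrt L\<bar> * (sqrt t + sqrt L)"
    using assms by (intro mult_left_mono) auto
  ultimately show ?thesis
    using assms by (simp add: pos_le_divide_eq)
qed

lemma powr_half_diff_abs_le:
  fixes t L :: real
  assumes "0 < t" "t \<le> 1" "0 < L" "L \<le> 1"
  shows "\<bar>t powr (real n / 2) - L powr (real n / 2)\<bar> \<le> real n / sqrt L * \<bar>t - L\<bar>"
proof -
  have "\<bar>t powr (real n / 2) - L powr (real n / 2)\<bar> = \<bar>sqrt t ^ n - sqrt L ^ n\<bar>"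
    using assms by (simp add: powr_half_nat_eq_sqrt_power)
  also have "\<dots> \<le> real n * \<bar>sqrt t - sqrt L\<bar>"
    using assms by (intro power_diff_abs_le) auto
  also have "\<dots> \<le> real n * (\<bar>t - L\<bar> / sqrt L)"
    using assms by (intro mult_left_mono sqrt_diff_abs_le) auto
  finally show ?thesis by simp
qed

text \<open>With \<open>t = a / (a + \<gamma>\<^sup>2)\<close> this turns the integrand of \<open>alpha_coef\<close> into a Gamma density
  times a bounded function.\<close>
definition beta_kernel :: "nat \<Rightarrow> nat \<Rightarrow> real \<Rightarrow> real" where
  "beta_kernel n k t = t powr (real n / 2) * (1 - t) ^ k"

lemma beta_kernel_nonneg: "0 \<le> t \<Longrightarrow> t \<le> 1 \<Longrightarrow> 0 \<le> beta_kernel n k t"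
  by (simp add: beta_kernel_def)

lemma beta_kernel_le_one: "0 \<le> t \<Longrightarrow> t \<le> 1 \<Longrightarrow> beta_kernel n k t \<le> 1"
  by (simp add: beta_kernel_def mult_le_one powr_le1 power_le_one)

lemma beta_kernel_diff_abs_le:
  fixes t L :: real
  assumes "0 < t" "t \<le> 1" "0 < L" "L \<le> 1"
  shows "\<bar>beta_kernel n k t - beta_kernel n k L\<bar> \<le> (real n / sqrt L + real k) * \<bar>t - L\<bar>"
proof -
  let ?x1 = "t powr (real n / 2)" and ?x2 = "L powr (real n / 2)"
  let ?y1 = "(1 - t) ^ k" and ?y2 = "(1 - L) ^ k"
  have "?x1 * ?y1 - ?x2 * ?y2 = (?x1 - ?x2) * ?y1 + ?x2 * (?y1 - ?y2)"
    by (simp add: algebra_simps)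
  then have "\<bar>?x1 * ?y1 - ?x2 * ?y2\<bar> \<le> \<bar>?x1 - ?x2\<bar> * \<bar>?y1\<bar> + \<bar>?x2\<bar> * \<bar>?y1 - ?y2\<bar>"
    by (metis abs_mult abs_triangle_ineq)
  also have "\<dots> \<le> \<bar>?x1 - ?x2\<bar> * 1 + 1 * \<bar>?y1 - ?y2\<bar>"
    using assms by (intro add_mono mult_left_mono mult_right_mono)
      (auto simp: power_le_one powr_le1 abs_le_iff)
  also have "\<dots> \<le> real n / sqrt L * \<bar>t - L\<bar> + real k * \<bar>(1 - t) - (1 - L)\<bar>"
    using powr_half_diff_abs_le[OF assms, of n] power_diff_abs_le[of "1 - t" "1 - L" k] assms
    by (intro add_mono) auto
  finally show ?thesis
    by (simp add: beta_kernel_def algebra_simps abs_minus_commute)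
qed

lemma frac_shift_diff_abs_le:
  fixes a g \<nu> :: real
  assumes "a > 0" "g > 0" "\<nu> > 0"
  shows "\<bar>a / (a + g) - \<nu> / (\<nu> + g)\<bar> \<le> \<bar>a / \<nu> - 1\<bar>"
proof -
  have diff: "a / (a + g) - \<nu> / (\<nu> + g) = g * (a - \<nu>) / ((a + g) * (\<nu> + g))"
    using assms by (simp add: field_simps)
  have "\<bar>a / (a + g) - \<nu> / (\<nu> + g)\<bar> = (g / (a + g)) * (\<bar>a - \<nu>\<bar> / (\<nu> + g))"
    unfolding diff using assms by (simp add: abs_mult)
  also have "\<dots> \<le> 1 * (\<bar>a - \<nu>\<bar> / \<nu>)"
    using assms by (intro mult_mono divide_left_mono) auto
  also have "\<bar>a - \<nu>\<bar> / \<nu> = \<bar>a / \<nu> - 1\<bar>"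
    using assms abs_div_pos[of \<nu> "a - \<nu>"] by (simp add: diff_divide_distrib)
  finally show ?thesis by simp
qed

lemma abs_le_add_square_div:
  fixes y s :: real
  assumes "s > 0"
  shows "\<bar>y\<bar> \<le> s + y\<^sup>2 / s"
proof (cases "\<bar>y\<bar> \<le> s")
  case True
  then show ?thesis using assms by (simp add: add_increasing2)
next
  case False
  then have "\<bar>y\<bar> * s \<le> \<bar>y\<bar> * \<bar>y\<bar>" by (intro mult_left_mono) auto
  then have "\<bar>y\<bar> \<le> y\<^sup>2 / s" using assms by (simp add: pos_le_divide_eq power2_eq_square)
  then show ?thesis using assms by simp
qed

definition gamma_mean :: "real \<Rightarrow> (real \<Rightarrow> real) \<Rightarrow> real" where
  "gamma_mean \<nu> h = (LBINT a:{0<..}. exp (- a) * a powr (\<nu> - 1) * h a) / Gamma \<nu>"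

lemma Gamma_weight_has_integral:
  fixes s :: real
  assumes "s > 0"
  shows "((\<lambda>a. exp (- a) * a powr (s - 1)) has_integral Gamma s) {0<..}"
proof -
  have "((\<lambda>t. t powr (s - 1) / exp t) has_integral Gamma s) {0..}"
    by (rule Gamma_integral_real[OF assms])
  then have "((\<lambda>t. if t \<in> {0<..} then t powr (s - 1) / exp t else 0) has_integral Gamma s) {0..}"
    by (rule has_integral_spike[of "{0}", rotated 2]) auto
  then have "((\<lambda>t. t powr (s - 1) / exp t) has_integral Gamma s) {0<..}"
    by (subst (asm) has_integral_restrict) auto
  then show ?thesis
    by (rule has_integral_eq[rotated]) (simp add: exp_minus field_simps)
qed

lemma Gamma_weight_set_integrable:
  fixes s :: real
  assumes "s > 0"
  shows "set_integrable lborel {0<..} (\<lambda>a. exp (- a) * a powr (s - 1))"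
proof -
  have "(\<lambda>a. exp (- a) * a powr (s - 1)) absolutely_integrable_on {0<..}"
    using Gamma_weight_has_integral[OF assms]
    by (intro nonnegative_absolutely_integrable_1) (auto simp: has_integral_integrable)
  moreover have "(\<lambda>x. indicator {0<..} x *\<^sub>R (exp (- x) * x powr (s - 1))) \<in> borel_measurable lborel"
    by measurable
  ultimately show ?thesis
    unfolding set_integrable_def using integrable_completion by blast
qed

lemma Gamma_weight_bounded_has_integral:
  fixes \<nu> B :: real and h :: "real \<Rightarrow> real"
  assumes "\<nu> > 0" "h \<in> borel_measurable borel" "\<And>a. a > 0 \<Longrightarrow> \<bar>h a\<bar> \<le> B"
  shows "((\<lambda>a. exp (- a) * a powr (\<nu> - 1) * h a) has_integral Gamma \<nu> * gamma_mean \<nu> h) {0<..}"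
proof -
  let ?w = "\<lambda>a::real. exp (- a) * a powr (\<nu> - 1)"
  have integrable: "set_integrable lborel {0<..} (\<lambda>a. ?w a * h a)"
  proof (rule set_integrable_bound)
    show "set_integrable lborel {0<..} (\<lambda>a. B * ?w a)"
      using Gamma_weight_set_integrable[OF assms(1)] by (rule set_integrable_mult_right)
    show "set_borel_measurable lborel {0<..} (\<lambda>a. ?w a * h a)"
      unfolding set_borel_measurable_def using assms(2) by measurable
    show "AE a in lborel. a \<in> {0<..} \<longrightarrow> norm (?w a * h a) \<le> norm (B * ?w a)"
      using assms(3) by (intro AE_I2) (auto simp: abs_mult intro: order_trans[OF _ abs_ge_self])
  qed
  then have "((\<lambda>a. ?w a * h a) has_integral (LBINT a:{0<..}. ?w a * h a)) {0<..}"
    using set_borel_integral_eq_integral[OF integrable] by (simp add: has_integral_integral)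
  moreover have "Gamma \<nu> > 0"
    using assms(1) by simp
  ultimately show ?thesis
    by (simp add: gamma_mean_def)
qed

lemma Gamma_weight_second_moment:
  fixes \<nu> :: real
  assumes "\<nu> > 0"
  shows "((\<lambda>a. exp (- a) * a powr (\<nu> - 1) * (a / \<nu> - 1)\<^sup>2) has_integral Gamma \<nu> / \<nu>) {0<..}"
proof -
  let ?w = "\<lambda>s a::real. exp (- a) * a powr (s - 1)"
  have "((\<lambda>a. ?w (\<nu> + 2) a / \<nu>\<^sup>2 - 2 * ?w (\<nu> + 1) a / \<nu> + ?w \<nu> a) has_integral
      Gamma (\<nu> + 2) / \<nu>\<^sup>2 - 2 * Gamma (\<nu> + 1) / \<nu> + Gamma \<nu>) {0<..}"
    using assms by (intro has_integral_add has_integral_diff has_integral_divide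
        has_integral_mult_right Gamma_weight_has_integral) auto
  moreover have "Gamma (\<nu> + 2) / \<nu>\<^sup>2 - 2 * Gamma (\<nu> + 1) / \<nu> + Gamma \<nu> = Gamma \<nu> / \<nu>"
  proof -
    have "Gamma (\<nu> + 1) = \<nu> * Gamma \<nu>"
      using assms by (intro Gamma_plus1) (auto dest: nonpos_Ints_nonpos)
    moreover have "Gamma (\<nu> + 2) = (\<nu> + 1) * Gamma (\<nu> + 1)"
    proof -
      have "\<nu> + 1 \<notin> \<int>\<^sub>\<le>\<^sub>0"
        using assms by (auto dest: nonpos_Ints_nonpos)
      from Gamma_plus1[OF this] show ?thesis
        by (simp add: add.assoc)
    qed
    ultimately show ?thesis
      using assms by (simp add: field_simps power2_eq_square)
  qed
  moreover have "?w (\<nu> + 2) a / \<nu>\<^sup>2 - 2 * ?w (\<nu> + 1) a / \<nu> + ?w \<nu> a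
      = exp (- a) * a powr (\<nu> - 1) * (a / \<nu> - 1)\<^sup>2" if "a \<in> {0<..}" for a
  proof -
    have "a powr (\<nu> + 2 - 1) = a powr (\<nu> - 1) * a powr 2"
      by (simp flip: powr_add)
    moreover have "a powr 2 = a\<^sup>2" "a powr (\<nu> + 1 - 1) = a powr (\<nu> - 1) * a"
      using that by (simp_all add: powr_mult_base mult.commute)
    ultimately show ?thesis
      using assms by (simp add: field_simps power2_eq_square)
  qed
  ultimately show ?thesis
    by (metis (no_types, lifting) has_integral_cong)
qed

lemma gamma_mean_nonneg_le_one:
  fixes \<nu> :: real and h :: "real \<Rightarrow> real"
  assumes "\<nu> > 0" "h \<in> borel_measurable borel" "\<And>a. a > 0 \<Longrightarrow> 0 \<le> h a \<and> h a \<le> 1"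
  shows "0 \<le> gamma_mean \<nu> h" and "gamma_mean \<nu> h \<le> 1"
proof -
  have Gamma_pos: "Gamma \<nu> > 0"
    using assms(1) by simp
  have mean: "((\<lambda>a. exp (- a) * a powr (\<nu> - 1) * h a) has_integral Gamma \<nu> * gamma_mean \<nu> h) {0<..}"
    using assms by (intro Gamma_weight_bounded_has_integral[where B = 1]) auto
  have "0 \<le> Gamma \<nu> * gamma_mean \<nu> h"
    by (rule has_integral_nonneg[OF mean]) (use assms(3) in auto)
  then show "0 \<le> gamma_mean \<nu> h"
    using Gamma_pos by (simp add: zero_le_mult_iff)
  have "Gamma \<nu> * gamma_mean \<nu> h \<le> Gamma \<nu>"
    by (rule has_integral_le[OF mean Gamma_weight_has_integral[OF assms(1)]])
      (use assms(3) in \<open>auto simp: mult_left_le\<close>)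
  then show "gamma_mean \<nu> h \<le> 1"
    using Gamma_pos by simp
qed

text \<open>A Gamma variable of shape \<open>\<nu>\<close> has mean and variance \<open>\<nu>\<close>; splitting
  \<open>\<bar>a / \<nu> - 1\<bar> \<le> s + (a / \<nu> - 1)\<^sup>2 / s\<close> at \<open>s = 1 / sqrt \<nu>\<close> turns the variance into the rate \<open>2 / sqrt \<nu>\<close>.\<close>
lemma Gamma_weight_abs_deviation_majorant:
  fixes \<nu> :: real
  assumes "\<nu> > 0"
  shows "((\<lambda>a. exp (- a) * a powr (\<nu> - 1) * (1 / sqrt \<nu> + (a / \<nu> - 1)\<^sup>2 / (1 / sqrt \<nu>)))
    has_integral Gamma \<nu> * (2 / sqrt \<nu>)) {0<..}"
proof (rule has_integral_eq_rhs)
  show "((\<lambda>a. exp (- a) * a powr (\<nu> - 1) * (1 / sqrt \<nu> + (a / \<nu> - 1)\<^sup>2 / (1 / sqrt \<nu>)))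
      has_integral Gamma \<nu> / sqrt \<nu> + Gamma \<nu> / \<nu> * sqrt \<nu>) {0<..}"
    using has_integral_add[OF has_integral_divide[OF Gamma_weight_has_integral[OF assms], of "sqrt \<nu>"]
        has_integral_mult_left[OF Gamma_weight_second_moment[OF assms], of "sqrt \<nu>"]]
    by (simp add: algebra_simps)
  show "Gamma \<nu> * (2 / sqrt \<nu>) = Gamma \<nu> / sqrt \<nu> + Gamma \<nu> / \<nu> * sqrt \<nu>"
    using assms by (simp add: field_simps real_sqrt_mult[symmetric])
qed

lemma gamma_mean_diff_abs_le:
  fixes \<nu> B K T \<delta> :: real and h :: "real \<Rightarrow> real"
  assumes "\<nu> > 0" "h \<in> borel_measurable borel" "\<And>a. a > 0 \<Longrightarrow> \<bar>h a\<bar> \<le> B" "K \<ge> 0"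
    and h_close: "\<And>a. a > 0 \<Longrightarrow> \<bar>h a - T\<bar> \<le> K * (\<bar>a / \<nu> - 1\<bar> + \<delta>)"
  shows "\<bar>gamma_mean \<nu> h - T\<bar> \<le> K * (2 / sqrt \<nu> + \<delta>)"
proof -
  define w where "w a = exp (- a) * a powr (\<nu> - 1)" for a :: real
  define s where "s = 1 / sqrt \<nu>"
  define U where "U a = K * (w a * (s + (a / \<nu> - 1)\<^sup>2 / s) + \<delta> * w a)" for a
  have s_pos: "s > 0" and Gamma_pos: "Gamma \<nu> > 0"
    using assms(1) by (simp_all add: s_def)
  have U_integral: "(U has_integral K * (Gamma \<nu> * (2 / sqrt \<nu>) + \<delta> * Gamma \<nu>)) {0<..}"
    unfolding U_def w_def s_def using assms(1)
    by (intro has_integral_mult_right has_integral_add Gamma_weight_has_integral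
        Gamma_weight_abs_deviation_majorant)
  have diff_integral: "((\<lambda>a. w a * h a - T * w a) has_integral Gamma \<nu> * gamma_mean \<nu> h - T * Gamma \<nu>) {0<..}"
    unfolding w_def using assms(1-3)
    by (intro has_integral_diff has_integral_mult_right Gamma_weight_bounded_has_integral
        Gamma_weight_has_integral)
  have pointwise: "\<bar>w a * h a - T * w a\<bar> \<le> U a" if "a \<in> {0<..}" for a
  proof -
    have w_nonneg: "w a \<ge> 0"
      by (simp add: w_def)
    have "w a * h a - T * w a = w a * (h a - T)"
      by (simp add: algebra_simps)
    then have "\<bar>w a * h a - T * w a\<bar> = w a * \<bar>h a - T\<bar>"
      using w_nonneg by (simp add: abs_mult)
    also have "\<dots> \<le> w a * (K * (s + (a / \<nu> - 1)\<^sup>2 / s + \<delta>))"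
    proof (rule mult_left_mono[OF _ w_nonneg])
      have "\<bar>a / \<nu> - 1\<bar> + \<delta> \<le> s + (a / \<nu> - 1)\<^sup>2 / s + \<delta>"
        using abs_le_add_square_div[OF s_pos] by simp
      then show "\<bar>h a - T\<bar> \<le> K * (s + (a / \<nu> - 1)\<^sup>2 / s + \<delta>)"
        using h_close[of a] that assms(4) by (meson greaterThan_iff mult_left_mono order_trans)
    qed
    also have "\<dots> = U a"
      by (simp add: U_def algebra_simps)
    finally show ?thesis .
  qed
  have "Gamma \<nu> * gamma_mean \<nu> h - T * Gamma \<nu> \<le> K * (Gamma \<nu> * (2 / sqrt \<nu>) + \<delta> * Gamma \<nu>)"
    by (rule has_integral_le[OF diff_integral U_integral]) (use pointwise in \<open>auto simp: abs_le_iff\<close>)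
  moreover have "- (K * (Gamma \<nu> * (2 / sqrt \<nu>) + \<delta> * Gamma \<nu>)) \<le> Gamma \<nu> * gamma_mean \<nu> h - T * Gamma \<nu>"
    by (rule has_integral_le[OF has_integral_neg[OF U_integral] diff_integral])
      (use pointwise in \<open>fastforce simp: abs_le_iff\<close>)
  ultimately have "\<bar>Gamma \<nu> * (gamma_mean \<nu> h - T)\<bar> \<le> Gamma \<nu> * (K * (2 / sqrt \<nu> + \<delta>))"
    unfolding abs_le_iff by (simp add: algebra_simps)
  then show ?thesis
    using Gamma_pos by (simp add: abs_mult)
qed

text \<open>The coefficient of \<open>x\<^sup>k\<close> in \<open>(1 - x) powr (- d / 2)\<close>.\<close>
definition neg_binomial_coef :: "real \<Rightarrow> nat \<Rightarrow> real" where
  "neg_binomial_coef d k = Gamma (real k + d / 2) / (fact k * Gamma (d / 2))"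

lemma neg_binomial_coef_pos: "d > 0 \<Longrightarrow> neg_binomial_coef d k > 0"
  by (simp add: neg_binomial_coef_def add_nonneg_pos)

lemma borel_measurable_beta_kernel_frac:
  "(\<lambda>a. beta_kernel n k (a / (a + g))) \<in> borel_measurable borel"
  unfolding beta_kernel_def by measurable

lemma beta_kernel_frac_bounds:
  assumes "a > 0" "g > 0"
  shows "0 \<le> beta_kernel n k (a / (a + g)) \<and> beta_kernel n k (a / (a + g)) \<le> 1"
  using assms by (simp add: beta_kernel_nonneg beta_kernel_le_one)

lemma beta_kernel_integrand_eq:
  fixes a g \<nu> :: real
  assumes "a > 0" "g > 0"
  shows "g ^ k * (exp (- a) * a powr (\<nu> + real n / 2 - 1) * (a + g) powr (- real k - real n / 2))
    = exp (- a) * a powr (\<nu> - 1) * beta_kernel n k (a / (a + g))"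
proof -
  have compl: "1 - a / (a + g) = g / (a + g)"
    using assms by (simp add: field_simps)
  have split_a: "a powr (\<nu> + real n / 2 - 1) = a powr (\<nu> - 1) * a powr (real n / 2)"
    by (simp add: algebra_simps flip: powr_add)
  have split_sum: "(a + g) powr (- real k - real n / 2) = inverse ((a + g) ^ k) * inverse ((a + g) powr (real n / 2))"
  proof -
    have "(a + g) powr (- real k - real n / 2) = (a + g) powr (- real k) * (a + g) powr (- (real n / 2))"
      by (simp flip: powr_add)
    also have "(a + g) powr (- real k) = inverse ((a + g) ^ k)"
      using assms by (simp add: powr_minus powr_realpow)
    finally show ?thesis
      by (simp only: powr_minus)
  qed
  have frac_powr: "(a / (a + g)) powr (real n / 2) = a powr (real n / 2) / (a + g) powr (real n / 2)"
    using assms by (simp add: powr_divide)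
  show ?thesis
    unfolding beta_kernel_def compl split_a split_sum frac_powr power_divide
    by (simp only: divide_inverse mult_ac)
qed

lemma alpha_coef_eq_gamma_mean:
  assumes "\<gamma> \<noteq> 0"
  shows "alpha_coef (real n) \<nu> \<gamma> k
    = neg_binomial_coef (real n) k * gamma_mean \<nu> (\<lambda>a. beta_kernel n k (a / (a + \<gamma>\<^sup>2)))"
proof -
  have "(LBINT a:{0<..}. (\<gamma>\<^sup>2) ^ k * (exp (- a) * a powr (\<nu> + real n / 2 - 1)
        * (a + \<gamma>\<^sup>2) powr (- real k - real n / 2)))
      = (LBINT a:{0<..}. exp (- a) * a powr (\<nu> - 1) * beta_kernel n k (a / (a + \<gamma>\<^sup>2)))"
    using assms by (intro set_lebesgue_integral_cong) (auto simp: beta_kernel_integrand_eq)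
  then show ?thesis
    by (simp add: alpha_coef_def neg_binomial_coef_def gamma_mean_def power_mult)
qed

lemma frac_shift_tendsto:
  fixes c :: real
  assumes "c > 0"
  shows "((\<lambda>\<nu>. \<nu> / (\<nu> + c * (\<nu> - 1))) \<longlongrightarrow> 1 / (1 + c)) at_top"
proof -
  have "((\<lambda>\<nu>. 1 / (1 + c * (1 - 1 / \<nu>))) \<longlongrightarrow> 1 / (1 + c * (1 - 0))) at_top"
    using assms by (intro tendsto_intros tendsto_divide_0[OF tendsto_const] filterlim_at_top_imp_at_infinity
        filterlim_ident) auto
  moreover have "\<forall>\<^sub>F \<nu> in at_top. 1 / (1 + c * (1 - 1 / \<nu>)) = \<nu> / (\<nu> + c * (\<nu> - 1))"
    using eventually_gt_at_top[of 0] by eventually_elim (simp add: field_simps)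
  ultimately show ?thesis
    by (simp add: tendsto_cong)
qed

lemma gamma_mean_beta_kernel_tendsto:
  fixes c :: real
  assumes "c > 0"
  shows "((\<lambda>\<nu>. gamma_mean \<nu> (\<lambda>a. beta_kernel n k (a / (a + c * (\<nu> - 1)))))
    \<longlongrightarrow> beta_kernel n k (1 / (1 + c))) at_top"
proof -
  define L where "L = 1 / (1 + c)"
  define K where "K = real n / sqrt L + real k"
  define \<delta> where "\<delta> = (\<lambda>\<nu>. \<bar>\<nu> / (\<nu> + c * (\<nu> - 1)) - L\<bar>)"
  have L: "0 < L" "L \<le> 1"
    using assms by (auto simp: L_def)
  have deviation: "\<bar>gamma_mean \<nu> (\<lambda>a. beta_kernel n k (a / (a + c * (\<nu> - 1)))) - beta_kernel n k L\<bar>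
      \<le> K * (2 / sqrt \<nu> + \<delta> \<nu>)" if "\<nu> > 1" for \<nu>
  proof (rule gamma_mean_diff_abs_le[where B = 1])
    have g: "c * (\<nu> - 1) > 0"
      using assms that by simp
    fix a :: real
    assume a: "a > 0"
    show "\<bar>beta_kernel n k (a / (a + c * (\<nu> - 1)))\<bar> \<le> 1"
      using beta_kernel_frac_bounds[OF a g] by simp
    have "\<bar>a / (a + c * (\<nu> - 1)) - L\<bar> \<le> \<bar>a / \<nu> - 1\<bar> + \<delta> \<nu>"
      using frac_shift_diff_abs_le[OF a g, of \<nu>] that unfolding \<delta>_def by linarith
    then show "\<bar>beta_kernel n k (a / (a + c * (\<nu> - 1))) - beta_kernel n k L\<bar> \<le> K * (\<bar>a / \<nu> - 1\<bar> + \<delta> \<nu>)"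
      using beta_kernel_diff_abs_le[of "a / (a + c * (\<nu> - 1))" L n k] a g L
      unfolding K_def by (auto elim!: order_trans intro!: mult_left_mono)
  qed (use that L in \<open>auto simp: K_def borel_measurable_beta_kernel_frac\<close>)
  have "((\<lambda>\<nu>. 2 / sqrt \<nu>) \<longlongrightarrow> 0) at_top"
    by (intro tendsto_divide_0[OF tendsto_const] filterlim_at_top_imp_at_infinity sqrt_at_top)
  moreover have "(\<delta> \<longlongrightarrow> 0) at_top"
    using tendsto_rabs[OF LIM_zero[OF frac_shift_tendsto[OF assms]]] by (simp add: \<delta>_def L_def)
  ultimately have "((\<lambda>\<nu>. K * (2 / sqrt \<nu> + \<delta> \<nu>)) \<longlongrightarrow> 0) at_top"
    using tendsto_mult_right_zero tendsto_add_zero by blast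
  then have "((\<lambda>\<nu>. gamma_mean \<nu> (\<lambda>a. beta_kernel n k (a / (a + c * (\<nu> - 1)))) - beta_kernel n k L)
      \<longlongrightarrow> 0) at_top"
    by (rule Lim_null_comparison[rotated])
      (use eventually_gt_at_top[of 1] in \<open>eventually_elim, use deviation in auto\<close>)
  then show ?thesis
    unfolding L_def by (rule LIM_zero_cancel)
qed

lemma alpha_coef_scaled_eq:
  fixes \<sigma> \<eta> \<nu> :: real
  assumes "\<sigma> > 0" "\<eta> \<noteq> 0" "\<nu> > 1"
  shows "alpha_coef (real n) \<nu> (\<eta> * sqrt (\<nu> - 1) / \<sigma>) k
    = neg_binomial_coef (real n) k * gamma_mean \<nu> (\<lambda>a. beta_kernel n k (a / (a + \<eta>\<^sup>2 / \<sigma>\<^sup>2 * (\<nu> - 1))))"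
proof -
  have "(\<eta> * sqrt (\<nu> - 1) / \<sigma>)\<^sup>2 = \<eta>\<^sup>2 / \<sigma>\<^sup>2 * (\<nu> - 1)"
    using assms by (simp add: power_divide power_mult_distrib)
  moreover have "\<eta> * sqrt (\<nu> - 1) / \<sigma> \<noteq> 0"
    using assms by simp
  ultimately show ?thesis
    by (simp add: alpha_coef_eq_gamma_mean)
qed

lemma alpha_coef_scaled_bounds:
  fixes \<sigma> \<eta> \<nu> :: real
  assumes "\<sigma> > 0" "\<eta> \<noteq> 0" "\<nu> > 1" "n > 0"
  shows "0 \<le> alpha_coef (real n) \<nu> (\<eta> * sqrt (\<nu> - 1) / \<sigma>) k"
    and "alpha_coef (real n) \<nu> (\<eta> * sqrt (\<nu> - 1) / \<sigma>) k \<le> neg_binomial_coef (real n) k"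
proof -
  let ?h = "\<lambda>a. beta_kernel n k (a / (a + \<eta>\<^sup>2 / \<sigma>\<^sup>2 * (\<nu> - 1)))"
  have "0 \<le> gamma_mean \<nu> ?h \<and> gamma_mean \<nu> ?h \<le> 1"
    using assms by (intro conjI gamma_mean_nonneg_le_one borel_measurable_beta_kernel_frac
        beta_kernel_frac_bounds) auto
  moreover have "neg_binomial_coef (real n) k > 0"
    using assms by (simp add: neg_binomial_coef_pos)
  ultimately show "0 \<le> alpha_coef (real n) \<nu> (\<eta> * sqrt (\<nu> - 1) / \<sigma>) k"
    and "alpha_coef (real n) \<nu> (\<eta> * sqrt (\<nu> - 1) / \<sigma>) k \<le> neg_binomial_coef (real n) k"
    using assms by (simp_all add: alpha_coef_scaled_eq mult_le_cancel_left1)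
qed

lemma alpha_coef_scaled_tendsto:
  fixes \<sigma> \<eta> :: real
  assumes "\<sigma> > 0" "\<eta> \<noteq> 0"
  shows "((\<lambda>\<nu>. alpha_coef (real n) \<nu> (\<eta> * sqrt (\<nu> - 1) / \<sigma>) k)
    \<longlongrightarrow> neg_binomial_coef (real n) k * beta_kernel n k (1 / (1 + \<eta>\<^sup>2 / \<sigma>\<^sup>2))) at_top"
proof -
  have "((\<lambda>\<nu>. neg_binomial_coef (real n) k
      * gamma_mean \<nu> (\<lambda>a. beta_kernel n k (a / (a + \<eta>\<^sup>2 / \<sigma>\<^sup>2 * (\<nu> - 1)))))
    \<longlongrightarrow> neg_binomial_coef (real n) k * beta_kernel n k (1 / (1 + \<eta>\<^sup>2 / \<sigma>\<^sup>2))) at_top"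
    using assms by (intro tendsto_mult_left gamma_mean_beta_kernel_tendsto) simp
  moreover have "\<forall>\<^sub>F \<nu> in at_top. neg_binomial_coef (real n) k
      * gamma_mean \<nu> (\<lambda>a. beta_kernel n k (a / (a + \<eta>\<^sup>2 / \<sigma>\<^sup>2 * (\<nu> - 1))))
    = alpha_coef (real n) \<nu> (\<eta> * sqrt (\<nu> - 1) / \<sigma>) k"
    using eventually_gt_at_top[of 1] by eventually_elim (use assms in \<open>simp add: alpha_coef_scaled_eq\<close>)
  ultimately show ?thesis
    by (simp add: tendsto_cong)
qed

lemma beta_kernel_inverse_one_plus:
  fixes c :: real
  assumes "c > 0"
  shows "beta_kernel n k (1 / (1 + c)) = c ^ k * (1 + c) powr (- real k - real n / 2)"
proof -
  have compl: "1 - 1 / (1 + c) = c / (1 + c)"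
    using assms by (simp add: field_simps)
  have split: "(1 + c) powr (- real k - real n / 2) = (1 + c) powr (- (real n / 2)) / (1 + c) ^ k"
  proof -
    have "(1 + c) powr (- real k - real n / 2) = (1 + c) powr (- (real n / 2) - real k)"
      by (intro arg_cong[where f = "(powr) (1 + c)"]) simp
    also have "\<dots> = (1 + c) powr (- (real n / 2)) / (1 + c) powr real k"
      by (rule powr_diff)
    finally show ?thesis
      using assms by (simp add: powr_realpow)
  qed
  have inverse_powr: "(1 / (1 + c)) powr (real n / 2) = (1 + c) powr (- (real n / 2))"
    using assms by (simp add: powr_divide powr_minus_divide)
  show ?thesis
    unfolding beta_kernel_def compl split inverse_powr power_divide
    by (simp only: divide_inverse mult_ac)
qed

lemma alpha_coef_scaled_ratio_tendsto:
  fixes \<sigma> \<eta> :: real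
  assumes "\<sigma> > 0" "\<eta> \<noteq> 0" "n > 0"
  shows "((\<lambda>\<nu>. alpha_coef (real n) \<nu> (\<eta> * sqrt (\<nu> - 1) / \<sigma>) k
      / (Gamma (real k + real n / 2) / (fact k * Gamma (real n / 2)) * (\<eta>\<^sup>2 / \<sigma>\<^sup>2) ^ k
         * (1 + \<eta>\<^sup>2 / \<sigma>\<^sup>2) powr (- real k - real n / 2))) \<longlongrightarrow> 1) at_top"
proof -
  define c where "c = \<eta>\<^sup>2 / \<sigma>\<^sup>2"
  define A where "A = Gamma (real k + real n / 2) / (fact k * Gamma (real n / 2)) * c ^ k
    * (1 + c) powr (- real k - real n / 2)"
  have c: "c > 0"
    using assms by (simp add: c_def)
  have "A > 0"
    using c assms by (simp add: A_def add_nonneg_pos)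
  have A_eq: "A = neg_binomial_coef (real n) k * beta_kernel n k (1 / (1 + c))"
    using c by (simp add: A_def neg_binomial_coef_def beta_kernel_inverse_one_plus)
  have "((\<lambda>\<nu>. alpha_coef (real n) \<nu> (\<eta> * sqrt (\<nu> - 1) / \<sigma>) k) \<longlongrightarrow> A) at_top"
    unfolding A_eq c_def by (rule alpha_coef_scaled_tendsto[OF assms(1,2)])
  then have "((\<lambda>\<nu>. alpha_coef (real n) \<nu> (\<eta> * sqrt (\<nu> - 1) / \<sigma>) k / A) \<longlongrightarrow> A / A) at_top"
    using \<open>A > 0\<close> by (intro tendsto_divide tendsto_const) simp_all
  moreover have "A / A = 1"
    using \<open>A > 0\<close> by simp
  ultimately show ?thesis
    unfolding A_def c_def by simp
qed

lemma neg_binomial_coef_mult_g_fun: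
  fixes z :: "'a::euclidean_space" and \<sigma> :: real
  defines "x \<equiv> (norm z)\<^sup>2 / (2 * \<sigma>\<^sup>2)"
  shows "neg_binomial_coef (real DIM('a)) k * g_fun k \<sigma> z
    = x ^ k / fact k * (exp (- x) / (\<sigma> * sqrt (2 * pi)) ^ DIM('a))"
proof -
  have "Gamma (real k + real DIM('a) / 2) \<noteq> 0" "Gamma (real DIM('a) / 2) \<noteq> 0"
    using DIM_positive[where 'a = 'a] by (simp_all add: add_nonneg_pos less_imp_neq[symmetric])
  then show ?thesis
    by (simp add: neg_binomial_coef_def g_fun_def x_def)
qed

lemma g_fun_mixture_sums:
  fixes z :: "'a::euclidean_space" and \<sigma> q :: real
  defines "x \<equiv> (norm z)\<^sup>2 / (2 * \<sigma>\<^sup>2)"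
  shows "(\<lambda>k. neg_binomial_coef (real DIM('a)) k * q ^ k * g_fun k \<sigma> z)
    sums (exp (- ((1 - q) * x)) / (\<sigma> * sqrt (2 * pi)) ^ DIM('a))"
proof -
  define C where "C = exp (- x) / (\<sigma> * sqrt (2 * pi)) ^ DIM('a)"
  have "(\<lambda>k. (q * x) ^ k / fact k) sums exp (q * x)"
    using exp_converges[of "q * x"] by (simp add: divide_inverse mult.commute)
  then have "(\<lambda>k. (q * x) ^ k / fact k * C) sums (exp (q * x) * C)"
    by (rule sums_mult2)
  moreover have "neg_binomial_coef (real DIM('a)) k * q ^ k * g_fun k \<sigma> z = (q * x) ^ k / fact k * C" for k
  proof -
    have "neg_binomial_coef (real DIM('a)) k * q ^ k * g_fun k \<sigma> z
        = q ^ k * (neg_binomial_coef (real DIM('a)) k * g_fun k \<sigma> z)"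
      by (simp only: mult_ac)
    then show ?thesis
      unfolding neg_binomial_coef_mult_g_fun x_def[symmetric] C_def
      by (simp add: power_mult_distrib)
  qed
  moreover have "exp (q * x) * C = exp (- ((1 - q) * x)) / (\<sigma> * sqrt (2 * pi)) ^ DIM('a)"
    unfolding C_def by (simp add: algebra_simps flip: exp_add)
  ultimately show ?thesis
    by simp
qed

lemma gaussian_density_rescale:
  fixes \<sigma> \<eta> r :: real
  assumes "\<sigma> > 0"
  defines "L \<equiv> 1 / (1 + \<eta>\<^sup>2 / \<sigma>\<^sup>2)"
  shows "L powr (real n / 2) * (exp (- (L * (r / (2 * \<sigma>\<^sup>2)))) / (\<sigma> * sqrt (2 * pi)) ^ n)
    = (2 * pi * (\<sigma>\<^sup>2 + \<eta>\<^sup>2)) powr (- real n / 2) * exp (- r / (2 * (\<sigma>\<^sup>2 + \<eta>\<^sup>2)))"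
proof -
  have sum_pos: "\<sigma>\<^sup>2 + \<eta>\<^sup>2 > 0"
    using assms by (simp add: add_pos_nonneg)
  have L_eq: "L = \<sigma>\<^sup>2 / (\<sigma>\<^sup>2 + \<eta>\<^sup>2)"
    using assms(1) by (simp add: L_def field_simps)
  have exponent: "L * (r / (2 * \<sigma>\<^sup>2)) = r / (2 * (\<sigma>\<^sup>2 + \<eta>\<^sup>2))"
    using assms(1) sum_pos unfolding L_eq by (simp add: field_simps)
  have "(\<sigma> * sqrt (2 * pi)) ^ n = sqrt (2 * pi * \<sigma>\<^sup>2) ^ n"
    using assms by (simp add: real_sqrt_mult mult.commute)
  also have "\<dots> = (2 * pi * \<sigma>\<^sup>2) powr (real n / 2)"
    using assms by (simp add: powr_half_nat_eq_sqrt_power)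
  finally have normalizer: "(\<sigma> * sqrt (2 * pi)) ^ n = (2 * pi * \<sigma>\<^sup>2) powr (real n / 2)" .
  have "L / (2 * pi * \<sigma>\<^sup>2) = \<sigma>\<^sup>2 / (\<sigma>\<^sup>2 * (2 * pi * (\<sigma>\<^sup>2 + \<eta>\<^sup>2)))"
    unfolding L_eq by (simp add: mult_ac)
  also have "\<dots> = 1 / (2 * pi * (\<sigma>\<^sup>2 + \<eta>\<^sup>2))"
    using assms by simp
  finally have ratio: "L / (2 * pi * \<sigma>\<^sup>2) = 1 / (2 * pi * (\<sigma>\<^sup>2 + \<eta>\<^sup>2))" .
  have "L powr (real n / 2) / (2 * pi * \<sigma>\<^sup>2) powr (real n / 2) = (L / (2 * pi * \<sigma>\<^sup>2)) powr (real n / 2)"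
    by (rule powr_divide[symmetric])
  also have "\<dots> = (2 * pi * (\<sigma>\<^sup>2 + \<eta>\<^sup>2)) powr (- real n / 2)"
    unfolding ratio using sum_pos by (simp add: powr_divide powr_minus_divide)
  finally have normalizing_constant: "L powr (real n / 2) / (2 * pi * \<sigma>\<^sup>2) powr (real n / 2)
      = (2 * pi * (\<sigma>\<^sup>2 + \<eta>\<^sup>2)) powr (- real n / 2)" .
  have "L powr (real n / 2) * (exp (- (L * (r / (2 * \<sigma>\<^sup>2)))) / (\<sigma> * sqrt (2 * pi)) ^ n)
      = L powr (real n / 2) / (2 * pi * \<sigma>\<^sup>2) powr (real n / 2) * exp (- (r / (2 * (\<sigma>\<^sup>2 + \<eta>\<^sup>2))))"
    unfolding exponent normalizer by (simp only: divide_inverse mult_ac)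
  then show ?thesis
    unfolding normalizing_constant by simp
qed

lemma alpha_coef_mixture_tendsto:
  fixes \<sigma> \<eta> :: real and z :: "'a::euclidean_space"
  assumes "\<sigma> > 0" "\<eta> \<noteq> 0"
  shows "((\<lambda>\<nu>. \<Sum>k. alpha_coef (real DIM('a)) \<nu> (\<eta> * sqrt (\<nu> - 1) / \<sigma>) k * g_fun k \<sigma> z)
    \<longlongrightarrow> (2 * pi * (\<sigma>\<^sup>2 + \<eta>\<^sup>2)) powr (- real DIM('a) / 2)
        * exp (- (norm z)\<^sup>2 / (2 * (\<sigma>\<^sup>2 + \<eta>\<^sup>2)))) at_top"
proof -
  define n where "n = DIM('a)"
  define L where "L = 1 / (1 + \<eta>\<^sup>2 / \<sigma>\<^sup>2)"
  define \<alpha> where "\<alpha> k \<nu> = alpha_coef (real n) \<nu> (\<eta> * sqrt (\<nu> - 1) / \<sigma>) k" for k \<nu>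
  define M where "M = (\<lambda>k. neg_binomial_coef (real n) k * g_fun k \<sigma> z)"
  have n_pos: "n > 0"
    by (simp add: n_def)
  have g_nonneg: "g_fun k \<sigma> z \<ge> 0" for k
    using assms(1) DIM_positive[where 'a = 'a] by (simp add: g_fun_def add_nonneg_pos)
  have "summable M"
    using g_fun_mixture_sums[of 1 \<sigma> z] by (simp add: M_def n_def sums_iff)
  moreover have "((\<lambda>\<nu>. \<alpha> k \<nu> * g_fun k \<sigma> z)
      \<longlongrightarrow> neg_binomial_coef (real n) k * beta_kernel n k L * g_fun k \<sigma> z) at_top" for k
    unfolding \<alpha>_def L_def using assms by (intro tendsto_mult_right alpha_coef_scaled_tendsto)
  moreover have "\<forall>\<^sub>F (k, \<nu>) in at_top \<times>\<^sub>F at_top. norm (\<alpha> k \<nu> * g_fun k \<sigma> z) \<le> M k"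
    unfolding eventually_prod_filter
  proof (intro exI conjI allI impI)
    show "eventually (\<lambda>_::nat. True) at_top"
      by simp
    show "eventually (\<lambda>\<nu>::real. \<nu> > 1) at_top"
      by (rule eventually_gt_at_top)
    fix k :: nat and \<nu> :: real
    assume "True" "\<nu> > 1"
    then show "case (k, \<nu>) of (k, \<nu>) \<Rightarrow> norm (\<alpha> k \<nu> * g_fun k \<sigma> z) \<le> M k"
      using alpha_coef_scaled_bounds[OF assms, of \<nu> n k] n_pos g_nonneg[of k]
      by (simp add: \<alpha>_def M_def abs_mult mult_right_mono)
  qed
  ultimately have limit: "((\<lambda>\<nu>. \<Sum>k. \<alpha> k \<nu> * g_fun k \<sigma> z)
      \<longlongrightarrow> (\<Sum>k. neg_binomial_coef (real n) k * beta_kernel n k L * g_fun k \<sigma> z)) at_top"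
    using tannerys_theorem by fastforce
  have series: "(\<lambda>k. neg_binomial_coef (real n) k * beta_kernel n k L * g_fun k \<sigma> z)
      sums (L powr (real n / 2) * (exp (- (L * ((norm z)\<^sup>2 / (2 * \<sigma>\<^sup>2)))) / (\<sigma> * sqrt (2 * pi)) ^ n))"
    using sums_mult[OF g_fun_mixture_sums[of "1 - L" \<sigma> z], of "L powr (real n / 2)"]
    by (simp add: beta_kernel_def n_def mult_ac)
  show ?thesis
    using limit unfolding sums_unique[OF series, symmetric]
    unfolding \<alpha>_def n_def L_def gaussian_density_rescale[OF assms(1)] .
qed

theorem theorem10:
  fixes \<sigma> \<eta> :: real
  assumes "\<sigma> > 0" and "\<eta> > 0"
  shows "(\<forall>k::nat.
           ((\<lambda>\<nu>. alpha_coef (real DIM('a::euclidean_space)) \<nu> (\<eta> * sqrt (\<nu> - 1) / \<sigma>) k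
                 / (Gamma (real k + real DIM('a) / 2) / (fact k * Gamma (real DIM('a) / 2))
                    * (\<eta>\<^sup>2 / \<sigma>\<^sup>2) ^ k
                    * (1 + \<eta>\<^sup>2 / \<sigma>\<^sup>2) powr (- real k - real DIM('a) / 2)))
            \<longlongrightarrow> 1) at_top)
       \<and> (\<forall>z::'a.
           ((\<lambda>\<nu>. \<Sum>k. alpha_coef (real DIM('a)) \<nu> (\<eta> * sqrt (\<nu> - 1) / \<sigma>) k * g_fun k \<sigma> z)
            \<longlongrightarrow> (2 * pi * (\<sigma>\<^sup>2 + \<eta>\<^sup>2)) powr (- real DIM('a) / 2)
                 * exp (- (norm z)\<^sup>2 / (2 * (\<sigma>\<^sup>2 + \<eta>\<^sup>2)))) at_top)"
proof -
  have "\<eta> \<noteq> 0"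
    using assms(2) by simp
  then show ?thesis
    using alpha_coef_scaled_ratio_tendsto[OF assms(1) _ DIM_positive[where 'a = 'a]]
      alpha_coef_mixture_tendsto[OF assms(1)] by blast
qed

end
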